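(* Let $\mathcal{A}$ be a complex Banach algebra with identity, let $\lambda$ be a nonzero complex number, and let $a \in \mathcal{A}^{qnil}$ and $b \in \mathcal{A}^d$. If $$ab = \lambda\, b a b^\pi,$$ then $a + b \in \mathcal{A}^d$ and $$(a + b)^d = b^d + \sum_{n=0}^{\infty} (b^d)^{n+2} a (a + b)^n,$$ where the series converges.
   Context: For $x\in\mathcal{A}$, $\mathrm{comm}(x)=\{y\in\mathcal{A}: xy=yx\}$. $\mathcal{A}^{qnil}$ is the set of quasinilpotent elements of $\mathcal{A}$, i.e. those $x$ with $\lim_{n\to\infty}\|x^n\|^{1/n}=0$. An element $x\in\mathcal{A}$ has a generalized Drazin (g-Drazin) inverse if there is $y \in \mathrm{comm}(x)$ with $y = yxy$ and $x - x^2y \in \mathcal{A}^{qnil}$; such $y$ is unique and denoted $x^d$. $\mathcal{A}^d$ denotes the set of g-Drazin invertible elements. The spectral idempotent of $x\in\mathcal{A}^d$ is $x^\pi = 1 - xx^d$. *)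

theory Defs
  imports Complex_Main
begin

class complex_banach_algebra_1 = real_normed_algebra_1 + banach +
  fixes scaleC :: "complex \<Rightarrow> 'a \<Rightarrow> 'a"
  assumes scaleC_add_right: "scaleC c (x + y) = scaleC c x + scaleC c y"
    and scaleC_add_left: "scaleC (c + d) x = scaleC c x + scaleC d x"
    and scaleC_scaleC: "scaleC c (scaleC d x) = scaleC (c * d) x"
    and scaleC_one: "scaleC 1 x = x"
    and scaleC_of_real: "scaleC (complex_of_real r) x = scaleR r x"
    and norm_scaleC: "norm (scaleC c x) = cmod c * norm x"
    and mult_scaleC_left: "scaleC c x * y = scaleC c (x * y)"
    and mult_scaleC_right: "x * scaleC c y = scaleC c (x * y)"

definition qnil :: "'a::real_normed_algebra_1 \<Rightarrow> bool" where
  "qnil x \<longleftrightarrow> (\<lambda>n. root n (norm (x ^ n))) \<longlonglongrightarrow> 0"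

definition is_gdrazin_inv :: "'a::real_normed_algebra_1 \<Rightarrow> 'a \<Rightarrow> bool" where
  "is_gdrazin_inv x y \<longleftrightarrow> x * y = y * x \<and> y = y * x * y \<and> qnil (x - x^2 * y)"

definition gdrazin :: "'a::real_normed_algebra_1 \<Rightarrow> bool" where
  "gdrazin x \<longleftrightarrow> (\<exists>y. is_gdrazin_inv x y)"

definition gdrazin_inv :: "'a::real_normed_algebra_1 \<Rightarrow> 'a" where
  "gdrazin_inv x = (THE y. is_gdrazin_inv x y)"

definition spec_idem :: "'a::real_normed_algebra_1 \<Rightarrow> 'a" where
  "spec_idem x = 1 - x * gdrazin_inv x"

end

theory Submission
  imports Defs
begin

text \<open>Let \<open>x = b\<^sup>d\<close>, \<open>q = b x\<close> and \<open>p = b\<^sup>\<pi> = 1 - q\<close>. The hypothesis gives \<open>a q = 0\<close>, i.e.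
  \<open>a = a p\<close>, and makes \<open>p a\<close> and \<open>b p\<close> skew-commute: \<open>(p a) (b p) = \<lambda> (b p) (p a)\<close>. Both are
  quasinilpotent, and expanding \<open>(p a + b p)^n\<close> with Gaussian binomial coefficients, which are
  bounded by the ordinary ones when \<open>|\<lambda>| \<le> 1\<close> (otherwise swap the summands), shows that
  \<open>c = p (a + b) = p a + b p\<close> is quasinilpotent. Since \<open>a (a + b)^n = a c^n p\<close>, the series
  \<open>Y = \<Sum>n. x^(n+2) a (a + b)^n\<close> converges geometrically, and \<open>y = x + Y\<close> satisfies
  \<open>(a + b) y = y (a + b) = q + b Y\<close> and \<open>y (a + b) y = y\<close>, while \<open>(a + b) - (a + b)^2 y = m\<close>
  with \<open>p m = c\<close> and \<open>m p = m\<close>. As \<open>u v\<close> is quasinilpotent whenever \<open>v u\<close> is, so is \<open>m\<close>.\<close>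

lemma qnil_geometric_bound:
  fixes x :: "'a::real_normed_algebra_1"
  assumes "qnil x" "e > 0"
  obtains K where "K \<ge> 1" "\<And>n. norm (x ^ n) \<le> K * e ^ n"
proof -
  have "eventually (\<lambda>n. root n (norm (x ^ n)) < e) sequentially"
    using assms unfolding qnil_def by (auto intro: order_tendstoD(2))
  then obtain M where M: "\<And>n. n \<ge> M \<Longrightarrow> root n (norm (x ^ n)) < e"
    by (auto simp: eventually_sequentially)
  define N where "N = max M 1"
  define K where "K = 1 + (\<Sum>j<N. norm (x ^ j) / e ^ j)"
  have K1: "K \<ge> 1" unfolding K_def using assms(2) by (auto intro!: sum_nonneg)
  have "norm (x ^ n) \<le> K * e ^ n" for n
  proof (cases "n < N")
    case True
    have "norm (x ^ n) / e ^ n \<le> (\<Sum>j<N. norm (x ^ j) / e ^ j)"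
      using True assms(2) by (intro member_le_sum) auto
    also have "\<dots> \<le> K" unfolding K_def by simp
    finally show ?thesis using assms(2) by (simp add: field_simps)
  next
    case False
    then have n: "n \<ge> M" "n > 0" unfolding N_def by auto
    have "norm (x ^ n) = root n (norm (x ^ n)) ^ n" using n by (simp add: real_root_pow_pos2)
    also have "\<dots> \<le> e ^ n" using M[OF n(1)] by (intro power_mono) (auto simp: real_root_ge_zero)
    also have "\<dots> \<le> K * e ^ n" using K1 assms(2) by simp
    finally show ?thesis .
  qed
  with K1 that show ?thesis by blast
qed

lemma qnil_intro_geometric_bound:
  fixes x :: "'a::real_normed_algebra_1"
  assumes "\<And>e. e > 0 \<Longrightarrow> \<exists>K. \<forall>n. norm (x ^ n) \<le> K * e ^ n"
  shows "qnil x"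
  unfolding qnil_def
proof (rule LIMSEQ_I)
  fix r :: real assume r: "r > 0"
  obtain K0 where K0: "\<forall>n. norm (x ^ n) \<le> K0 * (r/2) ^ n" using assms[of "r/2"] r by auto
  define K where "K = max K0 1"
  have K: "\<forall>n. norm (x ^ n) \<le> K * (r/2) ^ n" "K > 0"
    using K0 r unfolding K_def by (auto intro: order_trans mult_right_mono)
  have "(\<lambda>n. root n K) \<longlonglongrightarrow> 1" using K(2) by (rule LIMSEQ_root_const)
  then have "eventually (\<lambda>n. root n K < 3/2) sequentially" by (rule order_tendstoD(2)) simp
  then obtain M where M: "\<And>n. n \<ge> M \<Longrightarrow> root n K < 3/2" by (auto simp: eventually_sequentially)
  show "\<exists>no. \<forall>n\<ge>no. norm (root n (norm (x ^ n)) - 0) < r"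
  proof (intro exI allI impI)
    fix n assume n: "n \<ge> max M 1"
    then have n0: "n > 0" by auto
    have "root n (norm (x ^ n)) \<le> root n (K * (r/2) ^ n)"
      using K n0 by auto
    also have "\<dots> = root n K * (r/2)"
      using n0 r by (simp add: real_root_mult real_root_pos2)
    also have "\<dots> < r"
      using M[of n] n r by (simp add: mult_less_cancel_right_pos)
    finally show "norm (root n (norm (x ^ n)) - 0) < r"
      using n0 by (simp add: real_root_ge_zero)
  qed
qed

lemma summable_power_mult_norm_qnil:
  fixes w :: "'a::real_normed_algebra_1"
  assumes "qnil w" "C \<ge> 0"
  shows "summable (\<lambda>n. C ^ n * norm (w ^ n))"
proof -
  have pos: "C + 1 > 0" using assms(2) by simp
  obtain K where K: "\<And>n. norm (w ^ n) \<le> K * (1 / (2 * (C + 1))) ^ n"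
    using qnil_geometric_bound[OF assms(1), of "1 / (2 * (C + 1))"] pos by auto
  have bound: "norm (C ^ n * norm (w ^ n)) \<le> K * (1/2) ^ n" for n
  proof -
    have "C ^ n * norm (w ^ n) \<le> (C + 1) ^ n * (K * (1 / (2 * (C + 1))) ^ n)"
      using assms(2) by (intro mult_mono K power_mono) auto
    also have "\<dots> = K * ((C + 1) * (1 / (2 * (C + 1)))) ^ n"
      by (simp only: power_mult_distrib mult_ac)
    also have "(C + 1) * (1 / (2 * (C + 1))) = 1/2" using pos by simp
    finally show ?thesis using assms(2) by simp
  qed
  have "summable (\<lambda>n. K * (1/2::real) ^ n)"
    by (intro summable_mult summable_geometric) simp
  then show ?thesis using bound by (rule summable_comparison_test')
qed

lemma qnil_of_power_Suc_le:
  fixes z w :: "'a::real_normed_algebra_1"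
  assumes "qnil w" "\<And>n. norm (z ^ Suc n) \<le> C * norm (w ^ n)"
  shows "qnil z"
proof (rule qnil_intro_geometric_bound)
  fix e :: real assume e: "e > 0"
  obtain K where K: "K \<ge> 1" "\<And>n. norm (w ^ n) \<le> K * e ^ n"
    using qnil_geometric_bound[OF assms(1) e] by auto
  have "norm (z ^ n) \<le> (1 + \<bar>C\<bar> * K / e) * e ^ n" for n
  proof (cases n)
    case 0 then show ?thesis using K e by simp
  next
    case (Suc j)
    have "C * norm (w ^ j) \<le> \<bar>C\<bar> * norm (w ^ j)" by (intro mult_right_mono) auto
    then have "norm (z ^ n) \<le> \<bar>C\<bar> * norm (w ^ j)"
      using assms(2)[of j] unfolding Suc by linarith
    also have "\<dots> \<le> \<bar>C\<bar> * (K * e ^ j)" using K(2) by (intro mult_left_mono) auto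
    also have "\<dots> = (\<bar>C\<bar> * K / e) * e ^ n" using Suc e by simp
    also have "\<dots> \<le> (1 + \<bar>C\<bar> * K / e) * e ^ n" using e by (intro mult_right_mono) auto
    finally show ?thesis .
  qed
  then show "\<exists>K. \<forall>n. norm (z ^ n) \<le> K * e ^ n" by blast
qed

lemma power_Suc_mult_swap:
  fixes u v :: "'a::monoid_mult"
  shows "(v * u) ^ Suc n = v * (u * v) ^ n * u"
  by (induction n) (simp_all add: mult.assoc)

lemma qnil_mult_commute:
  fixes u v :: "'a::real_normed_algebra_1"
  assumes "qnil (u * v)"
  shows "qnil (v * u)"
proof (rule qnil_of_power_Suc_le[OF assms])
  fix n
  have "norm ((v * u) ^ Suc n) \<le> norm v * norm ((u * v) ^ n) * norm u"
    unfolding power_Suc_mult_swap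
    by (intro order_trans[OF norm_mult_ineq] mult_right_mono norm_mult_ineq) auto
  then show "norm ((v * u) ^ Suc n) \<le> norm v * norm u * norm ((u * v) ^ n)"
    by (simp add: mult_ac)
qed

lemma power_mult_commuting:
  fixes x y :: "'a::monoid_mult"
  assumes "x * y = y * x"
  shows "(x * y) ^ n = x ^ n * y ^ n"
proof (induction n)
  case (Suc n)
  have "(x * y) ^ Suc n = x * (y * x ^ n) * y ^ n" by (simp add: Suc mult.assoc)
  also have "y * x ^ n = x ^ n * y" using power_commuting_commutes[OF assms, symmetric] .
  finally show ?case by (simp add: mult.assoc)
qed simp

lemma power_Suc_idempotent:
  fixes e :: "'a::monoid_mult"
  assumes "e * e = e"
  shows "e ^ Suc n = e"
  by (induction n) (use assms in \<open>simp_all add: mult.assoc[symmetric]\<close>)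

lemma eq_0_if_norm_le_power_qnil:
  fixes z w :: "'a::real_normed_algebra_1"
  assumes "qnil w" "C \<ge> 0" "\<And>n. norm z \<le> C ^ Suc n * norm (w ^ Suc n)"
  shows "z = 0"
proof -
  have "(\<lambda>n. C ^ n * norm (w ^ n)) \<longlonglongrightarrow> 0"
    by (rule summable_LIMSEQ_zero[OF summable_power_mult_norm_qnil[OF assms(1,2)]])
  then have "(\<lambda>n. C ^ Suc n * norm (w ^ Suc n)) \<longlonglongrightarrow> 0"
    by (rule LIMSEQ_Suc)
  then have "norm z \<le> 0" by (rule LIMSEQ_le_const) (use assms(3) in auto)
  then show ?thesis by simp
qed

lemma is_gdrazin_inv_idempotent:
  assumes "is_gdrazin_inv x y"
  shows "x * y * (x * y) = x * y"
  using assms unfolding is_gdrazin_inv_def by (metis mult.assoc)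

lemma is_gdrazin_inv_absorb:
  assumes "is_gdrazin_inv x y"
  shows "x * y * y = y" "y * (x * y) = y"
  using assms unfolding is_gdrazin_inv_def by (metis mult.assoc)+

lemma is_gdrazin_inv_commute_idempotent:
  assumes "is_gdrazin_inv x y"
  shows "x * (x * y) = x * y * x"
  using assms unfolding is_gdrazin_inv_def by (metis mult.assoc)

lemma qnil_is_gdrazin_inv_complement:
  assumes "is_gdrazin_inv x y"
  shows "qnil (x * (1 - x * y))"
proof -
  have "x * (1 - x * y) = x - x\<^sup>2 * y" by (simp add: right_diff_distrib power2_eq_square mult.assoc)
  with assms show ?thesis unfolding is_gdrazin_inv_def by (simp only:)
qed

text \<open>On the range of \<open>g\<close>, \<open>x y = y\<^sup>n (x g)\<^sup>n\<close> is dominated by the powers of the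
  quasinilpotent \<open>x g\<close>.\<close>
lemma is_gdrazin_inv_annihilates_qnil_part:
  fixes x y g :: "'a::real_normed_algebra_1"
  assumes y: "is_gdrazin_inv x y" and g: "g * x = x * g" "g * g = g" "qnil (x * g)"
  shows "x * y * g = 0" "g * (x * y) = 0"
proof -
  have xy: "x * y = y * x" using y unfolding is_gdrazin_inv_def by simp
  have xy_pow: "x * y = y ^ Suc n * x ^ Suc n" "x * y = x ^ Suc n * y ^ Suc n" for n
    using power_Suc_idempotent[OF is_gdrazin_inv_idempotent[OF y], of n]
      power_mult_commuting[OF xy, of "Suc n"] power_mult_commuting[OF xy[symmetric], of "Suc n"]
    by (simp_all add: xy)
  have xg_pow: "x ^ Suc n * g = (x * g) ^ Suc n" "g * x ^ Suc n = (x * g) ^ Suc n" for n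
    using power_mult_commuting[OF g(1)[symmetric], of "Suc n"] power_Suc_idempotent[OF g(2), of n]
      power_commuting_commutes[OF g(1)[symmetric], of "Suc n"] by simp_all
  show "x * y * g = 0"
  proof (rule eq_0_if_norm_le_power_qnil[OF g(3) norm_ge_zero])
    fix n
    have "x * y * g = y ^ Suc n * (x * g) ^ Suc n" by (simp only: xy_pow(1)[of n] mult.assoc xg_pow(1))
    then have "norm (x * y * g) \<le> norm (y ^ Suc n) * norm ((x * g) ^ Suc n)"
      by (simp add: norm_mult_ineq)
    also have "\<dots> \<le> norm y ^ Suc n * norm ((x * g) ^ Suc n)"
      by (intro mult_right_mono norm_power_ineq norm_ge_zero)
    finally show "norm (x * y * g) \<le> norm y ^ Suc n * norm ((x * g) ^ Suc n)" .
  qed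
  show "g * (x * y) = 0"
  proof (rule eq_0_if_norm_le_power_qnil[OF g(3) norm_ge_zero])
    fix n
    have "g * (x * y) = (x * g) ^ Suc n * y ^ Suc n"
      by (simp only: xy_pow(2)[of n] mult.assoc[symmetric] xg_pow(2))
    then have "norm (g * (x * y)) \<le> norm ((x * g) ^ Suc n) * norm (y ^ Suc n)"
      by (simp add: norm_mult_ineq)
    also have "\<dots> \<le> norm ((x * g) ^ Suc n) * norm y ^ Suc n"
      by (intro mult_left_mono norm_power_ineq norm_ge_zero)
    finally show "norm (g * (x * y)) \<le> norm y ^ Suc n * norm ((x * g) ^ Suc n)"
      by (simp only: mult.commute)
  qed
qed

lemma is_gdrazin_inv_unique:
  fixes x y z :: "'a::real_normed_algebra_1"
  assumes y: "is_gdrazin_inv x y" and z: "is_gdrazin_inv x z"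
  shows "y = z"
proof -
  have complement: "(1 - x * w) * x = x * (1 - x * w)" "(1 - x * w) * (1 - x * w) = 1 - x * w"
    "qnil (x * (1 - x * w))" if "is_gdrazin_inv x w" for w
    using is_gdrazin_inv_commute_idempotent[OF that] is_gdrazin_inv_idempotent[OF that]
      qnil_is_gdrazin_inv_complement[OF that]
    by (simp_all add: algebra_simps)
  have "x * y * (1 - x * z) = 0"
    by (rule is_gdrazin_inv_annihilates_qnil_part(1)[OF y complement[OF z]])
  then have "x * y = x * y * (x * z)" by (simp add: right_diff_distrib)
  moreover have "(1 - x * y) * (x * z) = 0"
    by (rule is_gdrazin_inv_annihilates_qnil_part(2)[OF z complement[OF y]])
  then have "x * z = x * y * (x * z)" by (simp add: left_diff_distrib)
  ultimately have xy_xz: "x * y = x * z" by simp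
  have "y = x * y * y" using is_gdrazin_inv_absorb(1)[OF y] by simp
  also have "\<dots> = z * x * y"
    using xy_xz z unfolding is_gdrazin_inv_def by simp
  also have "\<dots> = z * (x * z)" by (simp add: mult.assoc xy_xz)
  also have "\<dots> = z" by (rule is_gdrazin_inv_absorb(2)[OF z])
  finally show ?thesis .
qed

lemma gdrazin_inv_eqI:
  fixes x y :: "'a::real_normed_algebra_1"
  assumes "is_gdrazin_inv x y"
  shows "gdrazin_inv x = y"
  unfolding gdrazin_inv_def using assms is_gdrazin_inv_unique by blast

lemma scaleC_zero_left [simp]: "scaleC 0 (x::'a::complex_banach_algebra_1) = 0"
  using scaleC_of_real[of 0 x] by simp

lemma scaleC_zero_right [simp]: "scaleC c (0::'a::complex_banach_algebra_1) = 0"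
  using scaleC_add_right[of c "0::'a" 0] by simp

text \<open>The coefficient of \<open>v^k u^(n-k)\<close> in \<open>(u + v)^n\<close> when \<open>u v = m v u\<close>: the Gaussian binomial
  coefficient in the variable \<open>m\<close>.\<close>
fun gauss_binomial :: "complex \<Rightarrow> nat \<Rightarrow> nat \<Rightarrow> complex" where
  "gauss_binomial m 0 k = (if k = 0 then 1 else 0)"
| "gauss_binomial m (Suc n) k =
    m ^ k * gauss_binomial m n k + (if k = 0 then 0 else gauss_binomial m n (k - 1))"

lemma gauss_binomial_eq_0: "n < k \<Longrightarrow> gauss_binomial m n k = 0"
  by (induction n arbitrary: k) auto

lemma norm_gauss_binomial_le:
  assumes "cmod m \<le> 1"
  shows "cmod (gauss_binomial m n k) \<le> real (n choose k)"
proof (induction n arbitrary: k)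
  case (Suc n)
  have first: "cmod (m ^ k * gauss_binomial m n k) \<le> real (n choose k)"
  proof -
    have "cmod (m ^ k * gauss_binomial m n k) = cmod m ^ k * cmod (gauss_binomial m n k)"
      by (simp add: norm_mult norm_power)
    also have "\<dots> \<le> 1 * real (n choose k)"
      using Suc assms by (intro mult_mono power_le_one) auto
    finally show ?thesis by simp
  qed
  show ?case
  proof (cases k)
    case (Suc j)
    have "cmod (gauss_binomial m (Suc n) k)
        \<le> cmod (m ^ k * gauss_binomial m n k) + cmod (gauss_binomial m n j)"
      using Suc by (simp add: norm_triangle_ineq)
    also have "\<dots> \<le> real (n choose k) + real (n choose j)" using first Suc.IH[of j] by simp
    also have "\<dots> = real (Suc n choose k)" using Suc by simp
    finally show ?thesis .
  qed (use first in simp)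
qed simp

lemma skew_commute_power:
  fixes u v :: "'a::complex_banach_algebra_1"
  assumes "u * v = scaleC m (v * u)"
  shows "u * v ^ k = scaleC (m ^ k) (v ^ k * u)"
proof (induction k)
  case (Suc k)
  have "u * v ^ Suc k = (u * v) * v ^ k" by (simp add: mult.assoc)
  also have "\<dots> = scaleC m (v * (u * v ^ k))" using assms by (simp add: mult_scaleC_left mult.assoc)
  also have "\<dots> = scaleC (m ^ Suc k) (v ^ Suc k * u)"
    using Suc by (simp add: mult_scaleC_right scaleC_scaleC mult.assoc mult.commute)
  finally show ?case .
qed (simp add: scaleC_one)

lemma mult_left_skew_sum:
  fixes u v :: "'a::complex_banach_algebra_1"
  assumes "u * v = scaleC m (v * u)"
  shows "u * (\<Sum>k\<le>n. scaleC (g k) (v ^ k * u ^ (n - k)))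
    = (\<Sum>k\<le>n. scaleC (m ^ k * g k) (v ^ k * u ^ (Suc n - k)))"
proof -
  have "u * (\<Sum>k\<le>n. scaleC (g k) (v ^ k * u ^ (n - k)))
      = (\<Sum>k\<le>n. scaleC (g k) ((u * v ^ k) * u ^ (n - k)))"
    by (simp add: sum_distrib_left mult_scaleC_right mult.assoc)
  also have "\<dots> = (\<Sum>k\<le>n. scaleC (m ^ k * g k) (v ^ k * u ^ (Suc n - k)))"
  proof (intro sum.cong refl)
    fix k assume "k \<in> {..n}"
    then have "Suc n - k = Suc (n - k)" by auto
    then show "scaleC (g k) ((u * v ^ k) * u ^ (n - k))
        = scaleC (m ^ k * g k) (v ^ k * u ^ (Suc n - k))"
      by (simp add: skew_commute_power[OF assms] mult_scaleC_left scaleC_scaleC mult.assoc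
          mult.commute)
  qed
  finally show ?thesis .
qed

lemma power_add_skew_commuting:
  fixes u v :: "'a::complex_banach_algebra_1"
  assumes "u * v = scaleC m (v * u)"
  shows "(u + v) ^ n = (\<Sum>k\<le>n. scaleC (gauss_binomial m n k) (v ^ k * u ^ (n - k)))"
proof (induction n)
  case (Suc n)
  have top_vanishes:
    "(\<Sum>k\<le>Suc n. scaleC (m ^ k * gauss_binomial m n k) (v ^ k * u ^ (Suc n - k)))
     = (\<Sum>k\<le>n. scaleC (m ^ k * gauss_binomial m n k) (v ^ k * u ^ (Suc n - k)))"
    by (simp add: gauss_binomial_eq_0)
  have shift:
    "(\<Sum>k\<le>Suc n. scaleC (if k = 0 then 0 else gauss_binomial m n (k - 1)) (v ^ k * u ^ (Suc n - k)))
     = (\<Sum>k\<le>n. scaleC (gauss_binomial m n k) (v ^ Suc k * u ^ (Suc n - Suc k)))"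
    by (subst sum.atMost_Suc_shift) simp
  have "(\<Sum>k\<le>Suc n. scaleC (gauss_binomial m (Suc n) k) (v ^ k * u ^ (Suc n - k)))
     = (\<Sum>k\<le>n. scaleC (m ^ k * gauss_binomial m n k) (v ^ k * u ^ (Suc n - k)))
       + (\<Sum>k\<le>n. scaleC (gauss_binomial m n k) (v ^ Suc k * u ^ (Suc n - Suc k)))"
    unfolding top_vanishes[symmetric] shift[symmetric]
    by (simp add: scaleC_add_left sum.distrib del: sum.atMost_Suc)
  also have "\<dots> = u * (u + v) ^ n + v * (u + v) ^ n"
    unfolding Suc mult_left_skew_sum[OF assms]
    by (simp add: sum_distrib_left mult_scaleC_right mult.assoc)
  finally show ?case by (simp add: distrib_right)
qed (simp add: scaleC_one)

lemma norm_power_add_skew_le: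
  fixes u v :: "'a::complex_banach_algebra_1"
  assumes "u * v = scaleC m (v * u)" "cmod m \<le> 1"
  shows "norm ((u + v) ^ n) \<le> (\<Sum>k\<le>n. real (n choose k) * (norm (v ^ k) * norm (u ^ (n - k))))"
proof -
  have "norm ((u + v) ^ n) \<le> (\<Sum>k\<le>n. norm (scaleC (gauss_binomial m n k) (v ^ k * u ^ (n - k))))"
    unfolding power_add_skew_commuting[OF assms(1)] by (rule norm_sum)
  also have "\<dots> \<le> (\<Sum>k\<le>n. real (n choose k) * (norm (v ^ k) * norm (u ^ (n - k))))"
    unfolding norm_scaleC
    by (intro sum_mono mult_mono norm_gauss_binomial_le assms(2) norm_mult_ineq) auto
  finally show ?thesis .
qed

lemma qnil_of_binomial_bound:
  fixes u v z :: "'a::real_normed_algebra_1"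
  assumes "qnil u" "qnil v"
    and bound: "\<And>n. norm (z ^ n) \<le> (\<Sum>k\<le>n. real (n choose k) * (norm (v ^ k) * norm (u ^ (n - k))))"
  shows "qnil z"
proof (rule qnil_intro_geometric_bound)
  fix e :: real assume e: "e > 0"
  obtain K1 where K1: "K1 \<ge> 1" "\<And>n. norm (u ^ n) \<le> K1 * (e/2) ^ n"
    using qnil_geometric_bound[OF assms(1), of "e/2"] e by auto
  obtain K2 where K2: "K2 \<ge> 1" "\<And>n. norm (v ^ n) \<le> K2 * (e/2) ^ n"
    using qnil_geometric_bound[OF assms(2), of "e/2"] e by auto
  have "norm (z ^ n) \<le> (K2 * K1) * e ^ n" for n
  proof -
    have "norm (z ^ n) \<le> (\<Sum>k\<le>n. real (n choose k) * (norm (v ^ k) * norm (u ^ (n - k))))"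
      by (rule bound)
    also have "\<dots> \<le> (\<Sum>k\<le>n. real (n choose k) * (K2 * K1 * (e/2) ^ n))"
    proof (intro sum_mono mult_left_mono)
      fix k assume k: "k \<in> {..n}"
      have "norm (v ^ k) * norm (u ^ (n - k)) \<le> (K2 * (e/2) ^ k) * (K1 * (e/2) ^ (n - k))"
        using e K1(1) K2(1) by (intro mult_mono K1 K2) auto
      also have "\<dots> = K2 * K1 * (e/2) ^ n"
        using k by (simp add: mult_ac power_add[symmetric])
      finally show "norm (v ^ k) * norm (u ^ (n - k)) \<le> K2 * K1 * (e/2) ^ n" .
    qed auto
    also have "\<dots> = real (\<Sum>k\<le>n. n choose k) * (K2 * K1 * (e/2) ^ n)"
      by (simp add: sum_distrib_right)
    also have "\<dots> = (K2 * K1) * e ^ n" by (simp add: choose_row_sum power_divide)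
    finally show ?thesis .
  qed
  then show "\<exists>K. \<forall>n. norm (z ^ n) \<le> K * e ^ n" by blast
qed

lemma qnil_add_skew_commuting:
  fixes u v :: "'a::complex_banach_algebra_1"
  assumes "u * v = scaleC m (v * u)" "m \<noteq> 0" "qnil u" "qnil v"
  shows "qnil (u + v)"
proof (cases "cmod m \<le> 1")
  case True
  show ?thesis by (rule qnil_of_binomial_bound[OF assms(3,4) norm_power_add_skew_le[OF assms(1) True]])
next
  case False
  have vu: "v * u = scaleC (1 / m) (u * v)"
    using assms(1,2) by (simp add: scaleC_scaleC scaleC_one)
  have "cmod (1 / m) = 1 / cmod m" by (simp add: norm_divide)
  also have "\<dots> \<le> 1" using False by (simp add: divide_le_eq)
  finally have "cmod (1 / m) \<le> 1" .
  from qnil_of_binomial_bound[OF assms(4,3) norm_power_add_skew_le[OF vu this]]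
  show ?thesis by (simp add: add.commute)
qed

text \<open>The construction of \<open>(a + b)\<^sup>d\<close> uses the hypothesis of the theorem only through
  \<open>a b\<^sup>\<pi> = a\<close> and the quasinilpotency of \<open>b\<^sup>\<pi> (a + b)\<close>; here \<open>x = b\<^sup>d\<close>.\<close>
locale gdrazin_perturbation =
  fixes a b x :: "'a::{real_normed_algebra_1, banach}"
  assumes gdrazin_inv_b: "is_gdrazin_inv b x"
    and annihilates: "a * (b * x) = 0"
    and qnil_compression: "qnil ((1 - b * x) * (a + b))"
begin

definition q where "q = b * x"
definition p where "p = 1 - q"
definition c where "c = p * (a + b)"
abbreviation "series_term n \<equiv> x ^ (n + 2) * a * (a + b) ^ n"
definition Y where "Y = (\<Sum>n. series_term n)"

lemma idempotents: "q * q = q" "p * p = p" "p * q = 0" "q * p = 0"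
  using is_gdrazin_inv_idempotent[OF gdrazin_inv_b] unfolding p_def q_def
  by (simp_all add: algebra_simps)

lemma x_absorb: "x * q = x" "q * x = x" "x * p = 0" "p * x = 0"
  using is_gdrazin_inv_absorb[OF gdrazin_inv_b] unfolding p_def q_def
  by (simp_all add: algebra_simps)

lemma b_commute: "b * p = p * b"
  using is_gdrazin_inv_commute_idempotent[OF gdrazin_inv_b] unfolding p_def q_def
  by (simp add: algebra_simps)

lemma a_absorb: "a * q = 0" "a * p = a" "a * x = 0"
proof -
  show aq: "a * q = 0" using annihilates unfolding q_def .
  then show "a * p = a" unfolding p_def by (simp add: right_diff_distrib)
  have "a * x = a * q * x" by (simp add: mult.assoc x_absorb(2))
  then show "a * x = 0" using aq by simp
qed

lemma compression_absorb: "c * p = c"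
proof -
  have "c * q = p * (a * q) + b * (p * q)"
    unfolding c_def by (simp add: distrib_left distrib_right mult.assoc[symmetric] b_commute)
  then have "c * q = 0" using a_absorb idempotents by simp
  then show ?thesis unfolding p_def by (simp add: right_diff_distrib)
qed

lemma p_mult_power: "p * (a + b) ^ n = c ^ n * p"
proof (induction n)
  case (Suc n)
  have "p * (a + b) ^ Suc n = p * (a + b) ^ n * (a + b)" by (simp add: mult.assoc power_commutes)
  also have "\<dots> = c ^ n * c" unfolding Suc c_def by (simp add: mult.assoc)
  also have "\<dots> = c ^ n * (c * p)" by (simp add: compression_absorb)
  also have "\<dots> = c ^ Suc n * p" by (simp add: mult.assoc[symmetric] power_commutes)
  finally show ?case .
qed simp

lemma a_mult_power: "a * (a + b) ^ n = a * c ^ n * p"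
proof -
  have "a * (a + b) ^ n = a * (p * (a + b) ^ n)" by (simp add: mult.assoc[symmetric] a_absorb)
  then show ?thesis by (simp add: p_mult_power mult.assoc)
qed

lemma norm_series_term_le:
  "norm (series_term n) \<le> (norm x ^ 2 * norm a * norm p) * (norm x ^ n * norm (c ^ n))"
proof -
  have "series_term n = x ^ (n + 2) * a * c ^ n * p" by (simp add: a_mult_power mult.assoc)
  then have "norm (series_term n) \<le> norm (x ^ (n + 2) * a * c ^ n) * norm p"
    by (simp add: norm_mult_ineq)
  also have "\<dots> \<le> norm (x ^ (n + 2) * a) * norm (c ^ n) * norm p"
    by (intro mult_right_mono norm_mult_ineq norm_ge_zero)
  also have "\<dots> \<le> norm (x ^ (n + 2)) * norm a * norm (c ^ n) * norm p"
    by (intro mult_right_mono norm_mult_ineq norm_ge_zero)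
  also have "\<dots> \<le> norm x ^ (n + 2) * norm a * norm (c ^ n) * norm p"
    by (intro mult_right_mono norm_power_ineq) auto
  also have "\<dots> = (norm x ^ 2 * norm a * norm p) * (norm x ^ n * norm (c ^ n))"
    by (simp add: power_add power2_eq_square mult_ac)
  finally show ?thesis .
qed

lemma summable_series: "summable series_term"
proof (rule summable_comparison_test')
  show "summable (\<lambda>n. (norm x ^ 2 * norm a * norm p) * (norm x ^ n * norm (c ^ n)))"
    using qnil_compression unfolding c_def p_def q_def
    by (intro summable_mult summable_power_mult_norm_qnil norm_ge_zero)
qed (rule norm_series_term_le)

lemma q_mult_power: "q * x ^ Suc n = x ^ Suc n"
  by (simp add: mult.assoc[symmetric] x_absorb(2))

lemma series_absorb: "q * Y = Y" "Y * p = Y"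
proof -
  have "q * series_term n = series_term n" for n
    using q_mult_power[of "Suc n"] by (simp add: mult.assoc[symmetric] numeral_2_eq_2)
  then show "q * Y = Y" unfolding Y_def using suminf_mult[OF summable_series, of q] by simp
  have "series_term n * p = series_term n" for n
    by (simp add: a_mult_power mult.assoc idempotents(2))
  then show "Y * p = Y" unfolding Y_def using suminf_mult2[OF summable_series, of p] by simp
qed

lemma series_annihilates: "p * Y = 0" "a * Y = 0" "Y * x = 0" "Y * Y = 0"
proof -
  show "p * Y = 0" by (metis series_absorb(1) idempotents(3) mult.assoc mult_zero_left)
  show "a * Y = 0" by (metis series_absorb(1) a_absorb(1) mult.assoc mult_zero_left)
  show "Y * x = 0" by (metis series_absorb(2) x_absorb(4) mult.assoc mult_zero_right)
  show "Y * Y = 0" by (metis series_absorb(2) \<open>p * Y = 0\<close> mult.assoc mult_zero_right)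
qed

lemma b_mult_series: "b * Y = x * a + Y * (a + b)"
proof -
  define u where "u n = x ^ Suc n * a * (a + b) ^ n" for n
  have "b * x ^ (n + 2) = x ^ Suc n" for n
    using q_mult_power[of n] unfolding q_def by (simp add: mult.assoc numeral_2_eq_2)
  then have "b * series_term n = u n" for n
    unfolding u_def by (simp add: mult.assoc[symmetric])
  then have u: "summable u" "b * Y = suminf u"
    unfolding Y_def using summable_mult[OF summable_series, of b] suminf_mult[OF summable_series, of b]
    by simp_all
  have "u (Suc n) = series_term n * (a + b)" for n
    unfolding u_def by (simp add: mult.assoc power_commutes)
  then have "(\<Sum>n. u (Suc n)) = Y * (a + b)"
    unfolding Y_def using suminf_mult2[OF summable_series, of "a + b"] by simp
  with u show ?thesis using suminf_split_head[OF u(1)] unfolding u_def by simp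
qed

theorem is_gdrazin_inv_add: "is_gdrazin_inv (a + b) (x + Y)"
  unfolding is_gdrazin_inv_def
proof (intro conjI)
  have right: "(a + b) * (x + Y) = q + b * Y"
    using a_absorb(3) series_annihilates(2) unfolding q_def by (simp add: algebra_simps)
  also have left: "\<dots> = (x + Y) * (a + b)"
    using b_mult_series gdrazin_inv_b unfolding is_gdrazin_inv_def q_def by (simp add: algebra_simps)
  finally show "(a + b) * (x + Y) = (x + Y) * (a + b)" .
  show "x + Y = (x + Y) * (a + b) * (x + Y)"
    unfolding left[symmetric] using x_absorb(2) series_absorb(1) series_annihilates(3,4)
    by (simp add: algebra_simps)
  define m where "m = (a + b) * (p - b * Y)"
  have "(a + b) - (a + b)\<^sup>2 * (x + Y) = m"
    unfolding m_def power2_eq_square mult.assoc right p_def by (simp add: algebra_simps)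
  moreover have "p * m = c"
  proof -
    have "p * m = c * p - c * b * Y"
      unfolding m_def c_def by (simp add: right_diff_distrib mult.assoc)
    also have "c * b * Y = c * b * (p * Y)"
      by (metis compression_absorb b_commute mult.assoc)
    finally show ?thesis using compression_absorb series_annihilates(1) by simp
  qed
  moreover have "m * p = m"
    unfolding m_def using idempotents(2) series_absorb(2) by (simp add: left_diff_distrib mult.assoc)
  moreover have "qnil c"
    using qnil_compression unfolding c_def p_def q_def .
  ultimately show "qnil ((a + b) - (a + b)\<^sup>2 * (x + Y))"
    using qnil_mult_commute[of p m] by simp
qed

end

lemma skew_hypothesis_annihilates:
  fixes a b x :: "'a::complex_banach_algebra_1"
  assumes x: "is_gdrazin_inv b x" and skew: "a * b = scaleC lam (b * a * (1 - b * x))"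
  shows "a * (b * x) = 0"
proof -
  have "a * (b * x) = a * (b * (b * x * x))"
    by (simp add: is_gdrazin_inv_absorb(1)[OF x])
  also have "\<dots> = a * b * (b * x) * x" by (simp only: mult.assoc)
  also have "\<dots> = scaleC lam (b * a * ((1 - b * x) * (b * x))) * x"
    unfolding skew by (simp add: mult_scaleC_left mult.assoc)
  also have "(1 - b * x) * (b * x) = 0"
    using is_gdrazin_inv_idempotent[OF x] by (simp add: left_diff_distrib)
  finally show ?thesis by simp
qed

lemma skew_hypothesis_qnil_compression:
  fixes a b x :: "'a::complex_banach_algebra_1"
  assumes x: "is_gdrazin_inv b x" and skew: "a * b = scaleC lam (b * a * (1 - b * x))"
    and "lam \<noteq> 0" "qnil a"
  shows "qnil ((1 - b * x) * (a + b))"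
proof -
  define p where "p = 1 - b * x"
  have pp: "p * p = p"
    unfolding p_def using is_gdrazin_inv_idempotent[OF x] by (simp add: algebra_simps)
  have bp: "b * p = p * b"
    unfolding p_def using is_gdrazin_inv_commute_idempotent[OF x] by (simp add: algebra_simps)
  have ap: "a * p = a"
    unfolding p_def using skew_hypothesis_annihilates[OF x skew] by (simp add: right_diff_distrib)
  have "(p * a) * (b * p) = p * (a * b) * p" by (simp only: mult.assoc)
  also have "\<dots> = scaleC lam (p * (b * a * p) * p)"
    unfolding skew p_def[symmetric] by (simp only: mult_scaleC_left mult_scaleC_right)
  also have "p * (b * a * p) * p = (b * p) * (p * a)"
    by (simp add: mult.assoc pp ap) (simp add: mult.assoc[symmetric] bp pp)
  finally have skew_pa_bp: "(p * a) * (b * p) = scaleC lam ((b * p) * (p * a))" .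
  have "qnil (p * a)" using qnil_mult_commute[of a p] \<open>qnil a\<close> ap by simp
  moreover have "qnil (b * p)" unfolding p_def by (rule qnil_is_gdrazin_inv_complement[OF x])
  moreover have "p * (a + b) = p * a + b * p" by (simp add: distrib_left bp)
  ultimately show ?thesis
    using qnil_add_skew_commuting[OF skew_pa_bp \<open>lam \<noteq> 0\<close>] unfolding p_def by simp
qed

theorem lemma2p3:
  fixes a b :: "'a::complex_banach_algebra_1" and lam :: complex
  assumes "lam \<noteq> 0" and "qnil a" and "gdrazin b"
    and "a * b = scaleC lam (b * a * spec_idem b)"
  shows "gdrazin (a + b)
    \<and> summable (\<lambda>n. gdrazin_inv b ^ (n + 2) * a * (a + b) ^ n)
    \<and> gdrazin_inv (a + b) = gdrazin_inv b + (\<Sum>n. gdrazin_inv b ^ (n + 2) * a * (a + b) ^ n)"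
proof -
  obtain x where x: "is_gdrazin_inv b x" using \<open>gdrazin b\<close> unfolding gdrazin_def ..
  have bd: "gdrazin_inv b = x" by (rule gdrazin_inv_eqI[OF x])
  have skew: "a * b = scaleC lam (b * a * (1 - b * x))"
    using assms(4) unfolding spec_idem_def bd .
  interpret gdrazin_perturbation a b x
    using x skew_hypothesis_annihilates[OF x skew]
      skew_hypothesis_qnil_compression[OF x skew assms(1,2)]
    by unfold_locales
  show ?thesis
    using is_gdrazin_inv_add summable_series gdrazin_inv_eqI[OF is_gdrazin_inv_add]
    unfolding gdrazin_def bd Y_def by blast
qed

end
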